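(* A posheaf $F$ on a locale $X$ is complete if and only if its opposite posheaf $F^{op}$ is complete.
   Context: Let $X$ be a locale with frame of opens $\mathcal{O}(X)$. A posheaf on $X$ is a sheaf of sets $F$ with (POS1) each $F(u)$ a poset; (POS2) restriction maps $F(u)\to F(v)$, $x\mapsto x|_v$ ($v\le u$), order-preserving; (POS3) if $u=\bigvee_i u_i$ and $s,t\in F(u)$ satisfy $s|_{u_i}\le t|_{u_i}$ for all $i$, then $s\le t$. $F^{op}$ has the same underlying sheaf with $F^{op}(u)=F(u)^{op}$. A point of $F$ is a morphism $p:\hat1\to F$ with $\hat1$ a subsheaf of the terminal sheaf, identified with an element of $F(\mathrm{dom}(p))$ where $\mathrm{dom}(p)$ is the largest open $u$ with $\hat1(u)\ne\emptyset$; points are ordered by $p_1\le p_2$ iff $\mathrm{dom}(p_1)\le\mathrm{dom}(p_2)$ and $p_1\le p_2|_{\mathrm{dom}(p_1)}$. For $u\in\mathcal{O}(X)$, $F^u$ is the restriction of $F$ to $\downarrow u$. A downsheaf is a subsheaf $G$ with each $G(v)$ a down-set of $F(v)$; $\mathbb{D}F(u)$ is the set of downsheaves of $F^u$, ordered by inclusion, with restriction to smaller opens; $\downarrow:F\to\mathbb{D}F$ sends $z\in F(u)$ to the downsheaf $v\mapsto\{y\in F(v)\mid y\le z|_v\}$ ($v\le u$). For order-preserving $\alpha,\beta$, $\alpha\dashv\beta$ means $\alpha x\le y\iff x\le\beta y$ for all points. $F$ is complete if $\downarrow:F\to\mathbb{D}F$ has a left adjoint. *)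

theory Defs
  imports Main
begin

text \<open>The frame of opens O(X) of a locale X is modelled as a complete lattice
type 'u satisfying the frame distributive law.  A sheaf of sets F on X is given
by its carriers F u :: 'x set, and restriction maps res u v (for v \<le> u).\<close>

definition frame :: "'u::complete_lattice itself \<Rightarrow> bool" where
  "frame _ \<longleftrightarrow> (\<forall>(a::'u) S. inf a (Sup S) = Sup ((\<lambda>s. inf a s) ` S))"

definition sheaf :: "('u::complete_lattice \<Rightarrow> 'x set) \<Rightarrow> ('u \<Rightarrow> 'u \<Rightarrow> 'x \<Rightarrow> 'x) \<Rightarrow> bool" where
  "sheaf F res \<longleftrightarrow>
     (\<forall>u v x. v \<le> u \<longrightarrow> x \<in> F u \<longrightarrow> res u v x \<in> F v) \<and>
     (\<forall>u x. x \<in> F u \<longrightarrow> res u u x = x) \<and>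
     (\<forall>u v w x. w \<le> v \<longrightarrow> v \<le> u \<longrightarrow> x \<in> F u \<longrightarrow> res v w (res u v x) = res u w x) \<and>
     (\<forall>U s. (\<forall>v\<in>U. s v \<in> F v) \<longrightarrow>
        (\<forall>v\<in>U. \<forall>w\<in>U. res v (inf v w) (s v) = res w (inf v w) (s w)) \<longrightarrow>
        (\<exists>!x. x \<in> F (Sup U) \<and> (\<forall>v\<in>U. res (Sup U) v x = s v)))"

definition posheaf :: "('u::complete_lattice \<Rightarrow> 'x set) \<Rightarrow> ('u \<Rightarrow> 'u \<Rightarrow> 'x \<Rightarrow> 'x)
     \<Rightarrow> ('u \<Rightarrow> 'x \<Rightarrow> 'x \<Rightarrow> bool) \<Rightarrow> bool" where
  "posheaf F res le \<longleftrightarrow> sheaf F res \<and>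
     \<comment> \<open>POS1: each F(u) is a poset\<close>
     (\<forall>u. \<forall>x\<in>F u. le u x x) \<and>
     (\<forall>u. \<forall>x\<in>F u. \<forall>y\<in>F u. le u x y \<longrightarrow> le u y x \<longrightarrow> x = y) \<and>
     (\<forall>u. \<forall>x\<in>F u. \<forall>y\<in>F u. \<forall>z\<in>F u. le u x y \<longrightarrow> le u y z \<longrightarrow> le u x z) \<and>
     \<comment> \<open>POS2: restrictions are order preserving\<close>
     (\<forall>u v. v \<le> u \<longrightarrow> (\<forall>x\<in>F u. \<forall>y\<in>F u. le u x y \<longrightarrow> le v (res u v x) (res u v y))) \<and>
     \<comment> \<open>POS3\<close>
     (\<forall>U. \<forall>s\<in>F (Sup U). \<forall>t\<in>F (Sup U).
        (\<forall>v\<in>U. le v (res (Sup U) v s) (res (Sup U) v t)) \<longrightarrow> le (Sup U) s t)"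

definition opp :: "('u \<Rightarrow> 'x \<Rightarrow> 'x \<Rightarrow> bool) \<Rightarrow> ('u \<Rightarrow> 'x \<Rightarrow> 'x \<Rightarrow> bool)" where
  "opp le = (\<lambda>u x y. le u y x)"

text \<open>DF(u): downsheaves of F^u, i.e. subsheaves G of F restricted to the down-set of u
with each G(v) a down-set of F(v).  They are represented as functions on all opens,
vanishing outside the down-set of u.\<close>

definition downsheaves :: "('u::complete_lattice \<Rightarrow> 'x set) \<Rightarrow> ('u \<Rightarrow> 'u \<Rightarrow> 'x \<Rightarrow> 'x)
     \<Rightarrow> ('u \<Rightarrow> 'x \<Rightarrow> 'x \<Rightarrow> bool) \<Rightarrow> 'u \<Rightarrow> ('u \<Rightarrow> 'x set) set" where
  "downsheaves F res le u = {G.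
     (\<forall>v. \<not> v \<le> u \<longrightarrow> G v = {}) \<and>
     (\<forall>v. v \<le> u \<longrightarrow> G v \<subseteq> F v) \<and>
     (\<forall>v. v \<le> u \<longrightarrow> (\<forall>x\<in>G v. \<forall>y\<in>F v. le v y x \<longrightarrow> y \<in> G v)) \<and>
     (\<forall>v w. w \<le> v \<longrightarrow> v \<le> u \<longrightarrow> (\<forall>x\<in>G v. res v w x \<in> G w)) \<and>
     (\<forall>V. Sup V \<le> u \<longrightarrow> (\<forall>x\<in>F (Sup V). (\<forall>w\<in>V. res (Sup V) w x \<in> G w) \<longrightarrow> x \<in> G (Sup V)))}"

definition resD :: "'u::complete_lattice \<Rightarrow> 'u \<Rightarrow> ('u \<Rightarrow> 'x set) \<Rightarrow> ('u \<Rightarrow> 'x set)" where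
  "resD u v G = (\<lambda>w. if w \<le> v then G w else {})"

definition down :: "('u::complete_lattice \<Rightarrow> 'x set) \<Rightarrow> ('u \<Rightarrow> 'u \<Rightarrow> 'x \<Rightarrow> 'x)
     \<Rightarrow> ('u \<Rightarrow> 'x \<Rightarrow> 'x \<Rightarrow> bool) \<Rightarrow> 'u \<Rightarrow> 'x \<Rightarrow> ('u \<Rightarrow> 'x set)" where
  "down F res le u z = (\<lambda>v. if v \<le> u then {y \<in> F v. le v y (res u v z)} else {})"

definition posheaf_mor_DF :: "('u::complete_lattice \<Rightarrow> 'x set) \<Rightarrow> ('u \<Rightarrow> 'u \<Rightarrow> 'x \<Rightarrow> 'x)
     \<Rightarrow> ('u \<Rightarrow> 'x \<Rightarrow> 'x \<Rightarrow> bool) \<Rightarrow> ('u \<Rightarrow> ('u \<Rightarrow> 'x set) \<Rightarrow> 'x) \<Rightarrow> bool" where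
  "posheaf_mor_DF F res le \<alpha> \<longleftrightarrow>
     (\<forall>u. \<forall>G\<in>downsheaves F res le u. \<alpha> u G \<in> F u) \<and>
     (\<forall>u v. v \<le> u \<longrightarrow> (\<forall>G\<in>downsheaves F res le u. \<alpha> v (resD u v G) = res u v (\<alpha> u G))) \<and>
     (\<forall>u. \<forall>G\<in>downsheaves F res le u. \<forall>H\<in>downsheaves F res le u.
         G \<le> H \<longrightarrow> le u (\<alpha> u G) (\<alpha> u H))"

text \<open>Points of F are pairs (d, y) with y \<in> F d; points of DF are pairs (d, G) with
G \<in> DF(d).  alpha is left adjoint to down iff for all such points
alpha(d,G) \<le> (d',y) \<longleftrightarrow> (d,G) \<le> down(d',y), using the order on points.\<close>
definition complete :: "('u::complete_lattice \<Rightarrow> 'x set) \<Rightarrow> ('u \<Rightarrow> 'u \<Rightarrow> 'x \<Rightarrow> 'x)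
     \<Rightarrow> ('u \<Rightarrow> 'x \<Rightarrow> 'x \<Rightarrow> bool) \<Rightarrow> bool" where
  "complete F res le \<longleftrightarrow> (\<exists>\<alpha>. posheaf_mor_DF F res le \<alpha> \<and>
     (\<forall>d d' G y. G \<in> downsheaves F res le d \<longrightarrow> y \<in> F d' \<longrightarrow>
        ((d \<le> d' \<and> le d (\<alpha> d G) (res d' d y)) \<longleftrightarrow>
         (d \<le> d' \<and> G \<le> resD d' d (down F res le d' y)))))"

end

theory Submission
  imports Defs
begin

text \<open>A left adjoint \<alpha> of \<open>\<down>\<close> computes joins of downsheaves.  Given a downsheaf U of
\<open>F\<^sup>o\<^sup>p\<close>, i.e. an up-closed subsheaf of F, its meet is the join of the downsheaf of local
lower bounds of U; this gives a left adjoint of \<open>\<down>\<close> for \<open>F\<^sup>o\<^sup>p\<close>.  The frame law is what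
makes local lower bounds glue: a bound over \<open>w'\<close> is checked on the cover \<open>w' \<sqinter> w\<close>.
Applying the construction to \<open>F\<^sup>o\<^sup>p\<close> gives the converse.\<close>

lemma posheafD:
  assumes "posheaf F res le"
  shows posheaf_res: "v \<le> u \<Longrightarrow> x \<in> F u \<Longrightarrow> res u v x \<in> F v"
    and posheaf_res_id: "x \<in> F u \<Longrightarrow> res u u x = x"
    and posheaf_res_res: "w \<le> v \<Longrightarrow> v \<le> u \<Longrightarrow> x \<in> F u \<Longrightarrow> res v w (res u v x) = res u w x"
    and posheaf_refl: "x \<in> F u \<Longrightarrow> le u x x"
    and posheaf_trans: "x \<in> F u \<Longrightarrow> y \<in> F u \<Longrightarrow> z \<in> F u \<Longrightarrow> le u x y \<Longrightarrow> le u y z \<Longrightarrow> le u x z"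
    and posheaf_res_mono: "v \<le> u \<Longrightarrow> x \<in> F u \<Longrightarrow> y \<in> F u \<Longrightarrow> le u x y \<Longrightarrow> le v (res u v x) (res u v y)"
    and posheaf_le_glue: "s \<in> F (Sup U) \<Longrightarrow> t \<in> F (Sup U) \<Longrightarrow>
        (\<And>v. v \<in> U \<Longrightarrow> le v (res (Sup U) v s) (res (Sup U) v t)) \<Longrightarrow> le (Sup U) s t"
  using assms unfolding posheaf_def sheaf_def by (elim conjE; metis)+

lemma opp_opp [simp]: "opp (opp le) = le"
  unfolding opp_def by simp

lemma posheaf_opp: "posheaf F res le \<Longrightarrow> posheaf F res (opp le)"
  unfolding posheaf_def opp_def by (elim conjE) (intro conjI; metis)

lemma posheaf_le_local:
  assumes "frame TYPE('u::complete_lattice)" and "posheaf F res le"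
    and s: "s \<in> F (w::'u)" and t: "t \<in> F w" and "w \<le> Sup V"
    and local: "\<And>v. v \<in> V \<Longrightarrow> le (inf w v) (res w (inf w v) s) (res w (inf w v) t)"
  shows "le w s t"
proof -
  have cover: "Sup ((inf w) ` V) = w"
    using assms(1) \<open>w \<le> Sup V\<close> unfolding frame_def by (metis inf_absorb1)
  have "le (Sup ((inf w) ` V)) s t"
    by (rule posheaf_le_glue[OF assms(2)]) (use s t local in \<open>auto simp: cover\<close>)
  then show ?thesis
    by (simp add: cover)
qed

lemma downsheavesD:
  assumes "G \<in> downsheaves F res le u"
  shows downsheaves_outside: "\<not> v \<le> u \<Longrightarrow> G v = {}"
    and downsheaves_subset: "v \<le> u \<Longrightarrow> G v \<subseteq> F v"
    and downsheaves_down_closed: "v \<le> u \<Longrightarrow> x \<in> G v \<Longrightarrow> y \<in> F v \<Longrightarrow> le v y x \<Longrightarrow> y \<in> G v"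
    and downsheaves_res: "w \<le> v \<Longrightarrow> v \<le> u \<Longrightarrow> x \<in> G v \<Longrightarrow> res v w x \<in> G w"
    and downsheaves_glue: "Sup V \<le> u \<Longrightarrow> x \<in> F (Sup V) \<Longrightarrow> (\<And>w. w \<in> V \<Longrightarrow> res (Sup V) w x \<in> G w)
           \<Longrightarrow> x \<in> G (Sup V)"
  using assms unfolding downsheaves_def by (simp_all; elim conjE; metis)+

lemma downsheavesI:
  assumes "\<And>v. \<not> v \<le> u \<Longrightarrow> G v = {}"
    and "\<And>v. v \<le> u \<Longrightarrow> G v \<subseteq> F v"
    and "\<And>v x y. v \<le> u \<Longrightarrow> x \<in> G v \<Longrightarrow> y \<in> F v \<Longrightarrow> le v y x \<Longrightarrow> y \<in> G v"
    and "\<And>v w x. w \<le> v \<Longrightarrow> v \<le> u \<Longrightarrow> x \<in> G v \<Longrightarrow> res v w x \<in> G w"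
    and "\<And>V x. Sup V \<le> u \<Longrightarrow> x \<in> F (Sup V) \<Longrightarrow> (\<And>w. w \<in> V \<Longrightarrow> res (Sup V) w x \<in> G w)
           \<Longrightarrow> x \<in> G (Sup V)"
  shows "G \<in> downsheaves F res le u"
  using assms unfolding downsheaves_def by simp

lemma resD_in_downsheaves:
  assumes G: "G \<in> downsheaves F res le u" and "v \<le> u"
  shows "resD u v G \<in> downsheaves F res le v"
proof (rule downsheavesI)
  have restrict: "resD u v G w = G w" and below: "w \<le> u" if "w \<le> v" for w
    using that \<open>v \<le> u\<close> by (auto simp: resD_def)
  show "resD u v G w = {}" if "\<not> w \<le> v" for w
    using that by (simp add: resD_def)
  show "resD u v G w \<subseteq> F w" if "w \<le> v" for w
    using downsheaves_subset[OF G below] that by (simp add: restrict)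
  show "y \<in> resD u v G w" if "w \<le> v" "x \<in> resD u v G w" "y \<in> F w" "le w y x" for w x y
    using downsheaves_down_closed[OF G below] that by (simp add: restrict)
  show "res w w' x \<in> resD u v G w'" if "w' \<le> w" "w \<le> v" "x \<in> resD u v G w" for w w' x
    using downsheaves_res[OF G \<open>w' \<le> w\<close> below] that order_trans[OF \<open>w' \<le> w\<close>]
    by (simp add: restrict)
  show "x \<in> resD u v G (Sup V)"
    if "Sup V \<le> v" "x \<in> F (Sup V)" "\<And>w. w \<in> V \<Longrightarrow> res (Sup V) w x \<in> resD u v G w" for V x
  proof -
    have "w \<le> v" if "w \<in> V" for w
      using Sup_upper[OF that] \<open>Sup V \<le> v\<close> by (rule order_trans)
    then show ?thesis
      using downsheaves_glue[OF G below] that by (simp add: restrict)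
  qed
qed

lemma le_resD_down_iff:
  assumes "G \<in> downsheaves F res le d" and "d \<le> d'"
  shows "G \<le> resD d' d (down F res le d' y) \<longleftrightarrow>
         (\<forall>v\<le>d. \<forall>x\<in>G v. le v x (res d' v y))"
  using assms downsheaves_outside[OF assms(1)] downsheaves_subset[OF assms(1)]
  unfolding le_fun_def resD_def down_def by (auto intro: order_trans)

definition lower_bounds_sheaf :: "('u::complete_lattice \<Rightarrow> 'x set) \<Rightarrow> ('u \<Rightarrow> 'u \<Rightarrow> 'x \<Rightarrow> 'x)
     \<Rightarrow> ('u \<Rightarrow> 'x \<Rightarrow> 'x \<Rightarrow> bool) \<Rightarrow> 'u \<Rightarrow> ('u \<Rightarrow> 'x set) \<Rightarrow> ('u \<Rightarrow> 'x set)" where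
  "lower_bounds_sheaf F res le d U =
     (\<lambda>w. if w \<le> d then {x \<in> F w. \<forall>w'\<le>w. \<forall>u\<in>U w'. le w' (res w w' x) u} else {})"

lemma lower_bounds_sheaf_iff:
  "w \<le> d \<Longrightarrow> x \<in> lower_bounds_sheaf F res le d U w \<longleftrightarrow>
     x \<in> F w \<and> (\<forall>w'\<le>w. \<forall>u\<in>U w'. le w' (res w w' x) u)"
  unfolding lower_bounds_sheaf_def by simp

lemma lower_bounds_sheaf_in_downsheaves:
  assumes fr: "frame TYPE('u::complete_lattice)" and P: "posheaf F res le"
    and U: "U \<in> downsheaves F res (opp le) (d::'u)"
  shows "lower_bounds_sheaf F res le d U \<in> downsheaves F res le d"
proof (rule downsheavesI)
  let ?L = "lower_bounds_sheaf F res le d U"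
  have UF: "u \<in> F w" if "w \<le> d" "u \<in> U w" for w u
    using downsheaves_subset[OF U] that by blast
  show "?L v = {}" if "\<not> v \<le> d" for v
    using that by (simp add: lower_bounds_sheaf_def)
  show "?L v \<subseteq> F v" for v
    by (auto simp: lower_bounds_sheaf_def)
  show "y \<in> ?L v" if vd: "v \<le> d" and x: "x \<in> ?L v" and y: "y \<in> F v" and "le v y x" for v x y
  proof -
    have xF: "x \<in> F v" using x vd by (simp add: lower_bounds_sheaf_iff)
    have "le w (res v w y) u" if wv: "w \<le> v" and u: "u \<in> U w" for w u
    proof (rule posheaf_trans[OF P])
      show "le w (res v w y) (res v w x)"
        using posheaf_res_mono[OF P wv y xF \<open>le v y x\<close>] .
      show "le w (res v w x) u"
        using x vd wv u by (simp add: lower_bounds_sheaf_iff)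
    qed (use posheaf_res[OF P wv] y xF UF[OF order_trans[OF wv vd] u] in auto)
    then show ?thesis
      using vd y by (simp add: lower_bounds_sheaf_iff)
  qed
  show "res v w x \<in> ?L w" if wv: "w \<le> v" and vd: "v \<le> d" and x: "x \<in> ?L v" for v w x
  proof -
    have xF: "x \<in> F v" using x vd by (simp add: lower_bounds_sheaf_iff)
    have "le w' (res w w' (res v w x)) u" if "w' \<le> w" "u \<in> U w'" for w' u
      using x vd that order_trans[OF that(1) wv]
      by (simp add: lower_bounds_sheaf_iff posheaf_res_res[OF P that(1) wv xF])
    then show ?thesis
      using posheaf_res[OF P wv xF] order_trans[OF wv vd] by (simp add: lower_bounds_sheaf_iff)
  qed
  show "x \<in> ?L (Sup V)"
    if Vd: "Sup V \<le> d" and xF: "x \<in> F (Sup V)" and local: "\<And>w. w \<in> V \<Longrightarrow> res (Sup V) w x \<in> ?L w"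
    for V x
  proof -
    have "le w' (res (Sup V) w' x) u" if w': "w' \<le> Sup V" and u: "u \<in> U w'" for w' u
    proof (rule posheaf_le_local[OF fr P posheaf_res[OF P w' xF] UF w'])
      show "w' \<le> d" using w' Vd by simp
      show "u \<in> U w'" by fact
      fix w assume "w \<in> V"
      then have wV: "w \<le> Sup V" and wd: "w \<le> d"
        using Vd Sup_upper order_trans by blast+
      have "res w' (inf w' w) u \<in> U (inf w' w)"
        using downsheaves_res[OF U _ _ u] w' Vd by simp
      then have "le (inf w' w) (res w (inf w' w) (res (Sup V) w x)) (res w' (inf w' w) u)"
        using local[OF \<open>w \<in> V\<close>] wd by (simp add: lower_bounds_sheaf_iff)
      then show "le (inf w' w) (res w' (inf w' w) (res (Sup V) w' x)) (res w' (inf w' w) u)"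
        using posheaf_res_res[OF P _ wV xF] posheaf_res_res[OF P _ w' xF] by simp
    qed
    then show ?thesis
      using xF Vd by (simp add: lower_bounds_sheaf_iff)
  qed
qed

lemma lower_bounds_sheaf_resD:
  assumes "v \<le> u"
  shows "lower_bounds_sheaf F res le v (resD u v U) = resD u v (lower_bounds_sheaf F res le u U)"
  using assms unfolding lower_bounds_sheaf_def resD_def
  by (intro ext) (auto intro: order_trans)

lemma lower_bounds_sheaf_antimono:
  assumes "G \<le> H"
  shows "lower_bounds_sheaf F res le d H \<le> lower_bounds_sheaf F res le d G"
proof (intro le_funI subsetI)
  fix w x
  assume "x \<in> lower_bounds_sheaf F res le d H w"
  with assms show "x \<in> lower_bounds_sheaf F res le d G w"
    unfolding lower_bounds_sheaf_def le_fun_def by (auto split: if_splits)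
qed

lemma posheaf_mor_DFD:
  assumes "posheaf_mor_DF F res le \<alpha>"
  shows posheaf_mor_DF_in: "G \<in> downsheaves F res le u \<Longrightarrow> \<alpha> u G \<in> F u"
    and posheaf_mor_DF_natural: "v \<le> u \<Longrightarrow> G \<in> downsheaves F res le u \<Longrightarrow>
           \<alpha> v (resD u v G) = res u v (\<alpha> u G)"
    and posheaf_mor_DF_mono: "G \<in> downsheaves F res le u \<Longrightarrow> H \<in> downsheaves F res le u \<Longrightarrow>
           G \<le> H \<Longrightarrow> le u (\<alpha> u G) (\<alpha> u H)"
  using assms unfolding posheaf_mor_DF_def by (elim conjE; metis)+

definition left_adjoint_down :: "('u::complete_lattice \<Rightarrow> 'x set) \<Rightarrow> ('u \<Rightarrow> 'u \<Rightarrow> 'x \<Rightarrow> 'x)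
     \<Rightarrow> ('u \<Rightarrow> 'x \<Rightarrow> 'x \<Rightarrow> bool) \<Rightarrow> ('u \<Rightarrow> ('u \<Rightarrow> 'x set) \<Rightarrow> 'x) \<Rightarrow> bool" where
  "left_adjoint_down F res le \<alpha> \<longleftrightarrow> posheaf_mor_DF F res le \<alpha> \<and>
     (\<forall>d d' G y. G \<in> downsheaves F res le d \<longrightarrow> y \<in> F d' \<longrightarrow>
        ((d \<le> d' \<and> le d (\<alpha> d G) (res d' d y)) \<longleftrightarrow>
         (d \<le> d' \<and> G \<le> resD d' d (down F res le d' y))))"

lemma left_adjoint_downD:
  assumes "left_adjoint_down F res le \<alpha>"
  shows left_adjoint_down_mor: "posheaf_mor_DF F res le \<alpha>"
    and left_adjoint_down_adj: "G \<in> downsheaves F res le d \<Longrightarrow> y \<in> F d' \<Longrightarrow> d \<le> d' \<Longrightarrow>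
           le d (\<alpha> d G) (res d' d y) \<longleftrightarrow> G \<le> resD d' d (down F res le d' y)"
  using assms unfolding left_adjoint_down_def by (elim conjE; metis)+

lemma complete_iff_left_adjoint_down: "complete F res le \<longleftrightarrow> (\<exists>\<alpha>. left_adjoint_down F res le \<alpha>)"
  unfolding complete_def left_adjoint_down_def ..

lemma left_adjoint_down_le_iff:
  assumes P: "posheaf F res le" and \<alpha>: "left_adjoint_down F res le \<alpha>"
    and G: "G \<in> downsheaves F res le d" and y: "y \<in> F d"
  shows "le d (\<alpha> d G) y \<longleftrightarrow> (\<forall>v\<le>d. \<forall>x\<in>G v. le v x (res d v y))"
proof -
  have "le d (\<alpha> d G) (res d d y) \<longleftrightarrow> G \<le> resD d d (down F res le d y)"
    using left_adjoint_down_adj[OF \<alpha> G y order_refl] .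
  then show ?thesis
    using le_resD_down_iff[OF G order_refl] posheaf_res_id[OF P y] by simp
qed

lemma left_adjoint_down_upper:
  assumes P: "posheaf F res le" and \<alpha>: "left_adjoint_down F res le \<alpha>"
    and G: "G \<in> downsheaves F res le d" and "x \<in> G d"
  shows "le d x (\<alpha> d G)"
proof -
  have \<alpha>G: "\<alpha> d G \<in> F d"
    using posheaf_mor_DF_in[OF left_adjoint_down_mor[OF \<alpha>] G] .
  have "le d (\<alpha> d G) (\<alpha> d G)"
    using posheaf_refl[OF P \<alpha>G] .
  then show ?thesis
    using left_adjoint_down_le_iff[OF P \<alpha> G \<alpha>G] \<open>x \<in> G d\<close> posheaf_res_id[OF P \<alpha>G] by auto
qed

lemma left_adjoint_down_lower_bounds:
  assumes fr: "frame TYPE('u::complete_lattice)" and P: "posheaf F res le"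
    and \<alpha>: "left_adjoint_down F res le \<alpha>"
    and U: "U \<in> downsheaves F res (opp le) (d::'u)" and z: "z \<in> F d"
  shows "le d z (\<alpha> d (lower_bounds_sheaf F res le d U)) \<longleftrightarrow> z \<in> lower_bounds_sheaf F res le d U d"
proof
  let ?L = "lower_bounds_sheaf F res le d U"
  have L: "?L \<in> downsheaves F res le d"
    using lower_bounds_sheaf_in_downsheaves[OF fr P U] .
  note mor = left_adjoint_down_mor[OF \<alpha>]
  have \<alpha>L: "\<alpha> d ?L \<in> F d"
    using posheaf_mor_DF_in[OF mor L] .
  show "z \<in> ?L d" if "le d z (\<alpha> d ?L)"
  proof (rule downsheaves_down_closed[OF L order_refl _ z that])
    have "le w (res d w (\<alpha> d ?L)) u" if wd: "w \<le> d" and u: "u \<in> U w" for w u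
    proof -
      have uF: "u \<in> F w"
        using downsheaves_subset[OF U wd] u by blast
      have "\<forall>v\<le>w. \<forall>x\<in>resD d w ?L v. le v x (res w v u)"
      proof (intro allI impI ballI)
        fix v x assume vw: "v \<le> w" and "x \<in> resD d w ?L v"
        then have "x \<in> ?L v" and vd: "v \<le> d"
          using wd by (auto simp: resD_def)
        moreover have "res w v u \<in> U v"
          using downsheaves_res[OF U vw wd u] .
        ultimately have "x \<in> F v" and "le v (res v v x) (res w v u)"
          by (auto simp: lower_bounds_sheaf_iff)
        then show "le v x (res w v u)"
          by (simp add: posheaf_res_id[OF P])
      qed
      then have "le w (\<alpha> w (resD d w ?L)) u"
        using left_adjoint_down_le_iff[OF P \<alpha> resD_in_downsheaves[OF L wd] uF] by blast
      then show ?thesis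
        using posheaf_mor_DF_natural[OF mor wd L] by simp
    qed
    then show "\<alpha> d ?L \<in> ?L d"
      using \<alpha>L by (simp add: lower_bounds_sheaf_iff)
  qed
  show "le d z (\<alpha> d ?L)" if "z \<in> ?L d"
    using left_adjoint_down_upper[OF P \<alpha> L that] .
qed

lemma left_adjoint_down_opp:
  assumes fr: "frame TYPE('u::complete_lattice)" and P: "posheaf F res le"
    and \<alpha>: "left_adjoint_down F res le \<alpha>"
  shows "left_adjoint_down F res (opp le) (\<lambda>(u::'u) U. \<alpha> u (lower_bounds_sheaf F res le u U))"
  unfolding left_adjoint_down_def posheaf_mor_DF_def
proof (intro conjI allI impI ballI)
  fix u U
  assume "U \<in> downsheaves F res (opp le) u"
  then show "\<alpha> u (lower_bounds_sheaf F res le u U) \<in> F u"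
    by (intro posheaf_mor_DF_in[OF left_adjoint_down_mor[OF \<alpha>]]
        lower_bounds_sheaf_in_downsheaves[OF fr P])
next
  fix u v U
  assume "v \<le> u" and "U \<in> downsheaves F res (opp le) u"
  then show "\<alpha> v (lower_bounds_sheaf F res le v (resD u v U)) =
      res u v (\<alpha> u (lower_bounds_sheaf F res le u U))"
    by (simp add: lower_bounds_sheaf_resD posheaf_mor_DF_natural[OF left_adjoint_down_mor[OF \<alpha>]]
        lower_bounds_sheaf_in_downsheaves[OF fr P])
next
  fix u G H
  assume "G \<in> downsheaves F res (opp le) u" and "H \<in> downsheaves F res (opp le) u" and "G \<le> H"
  then have "le u (\<alpha> u (lower_bounds_sheaf F res le u H)) (\<alpha> u (lower_bounds_sheaf F res le u G))"
    by (intro posheaf_mor_DF_mono[OF left_adjoint_down_mor[OF \<alpha>]] lower_bounds_sheaf_antimono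
        lower_bounds_sheaf_in_downsheaves[OF fr P])
  then show "opp le u (\<alpha> u (lower_bounds_sheaf F res le u G)) (\<alpha> u (lower_bounds_sheaf F res le u H))"
    by (simp add: opp_def)
next
  fix d d' U y
  assume U: "U \<in> downsheaves F res (opp le) d" and y: "y \<in> F d'"
  let ?L = "lower_bounds_sheaf F res le d U"
  show "(d \<le> d' \<and> opp le d (\<alpha> d ?L) (res d' d y)) \<longleftrightarrow>
        (d \<le> d' \<and> U \<le> resD d' d (down F res (opp le) d' y))"
  proof (cases "d \<le> d'")
    case True
    have z: "res d' d y \<in> F d"
      using posheaf_res[OF P True y] .
    have "opp le d (\<alpha> d ?L) (res d' d y) \<longleftrightarrow> res d' d y \<in> ?L d"
      unfolding opp_def using left_adjoint_down_lower_bounds[OF fr P \<alpha> U z] .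
    also have "\<dots> \<longleftrightarrow> (\<forall>w\<le>d. \<forall>u\<in>U w. le w (res d w (res d' d y)) u)"
      using z by (simp add: lower_bounds_sheaf_iff)
    also have "\<dots> \<longleftrightarrow> (\<forall>w\<le>d. \<forall>u\<in>U w. opp le w u (res d' w y))"
      using posheaf_res_res[OF P _ True y] by (simp add: opp_def)
    also have "\<dots> \<longleftrightarrow> U \<le> resD d' d (down F res (opp le) d' y)"
      using le_resD_down_iff[OF U True] by simp
    finally show ?thesis
      using True by simp
  qed simp
qed

lemma complete_opp:
  assumes "frame TYPE('u::complete_lattice)" and "posheaf F res le"
    and "complete F res (le :: 'u \<Rightarrow> 'x \<Rightarrow> 'x \<Rightarrow> bool)"
  shows "complete F res (opp le)"
  using assms left_adjoint_down_opp unfolding complete_iff_left_adjoint_down by blast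

theorem corollary3p1:
  fixes F :: "'u::complete_lattice \<Rightarrow> 'x set"
    and res :: "'u \<Rightarrow> 'u \<Rightarrow> 'x \<Rightarrow> 'x"
    and le :: "'u \<Rightarrow> 'x \<Rightarrow> 'x \<Rightarrow> bool"
  assumes "frame TYPE('u)"
    and "posheaf F res le"
  shows "complete F res le \<longleftrightarrow> complete F res (opp le)"
  using complete_opp[OF assms] complete_opp[OF assms(1) posheaf_opp[OF assms(2)]] by auto

end
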